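(* Suppose Assumptions (A), (B) and (C) hold, let $t\in(0,1/L_f]$ and $s\in\left(0,\frac{2}{L_\omega+\sigma}\right]$, and let $\{\mathbf x^k\}$ be generated by BiG-SAM from any $\mathbf x^0\in\mathbb R^n$. Then $\{\mathbf x^k\}$ converges to a point $\mathbf x^*\in X^*$ satisfying $\langle\nabla\omega(\mathbf x^* ),\mathbf x-\mathbf x^*\rangle\ge 0$ for all $\mathbf x\in X^*$; consequently $\mathbf x^*=\mathbf x^*_{mn}$, the unique minimizer of $\omega$ over $X^*$.
   Context: Assumption (A): $f:\mathbb R^n\to\mathbb R$ is convex and continuously differentiable with $L_f$-Lipschitz gradient; $g:\mathbb R^n\to(-\infty,\infty]$ is proper, lower semicontinuous and convex; the set $X^*$ of minimizers of $\varphi=f+g$ over $\mathbb R^n$ is nonempty. Assumption (B): $\omega:\mathbb R^n\to\mathbb R$ is $\sigma$-strongly convex ($\sigma>0$) and continuously differentiable with $L_\omega$-Lipschitz gradient. Assumption (C): $\{\alpha_k\}_{k\ge1}\subset(0,1]$, $\lim_k\alpha_k=0$, $\sum_k\alpha_k=\infty$, $\lim_k\alpha_{k+1}/\alpha_k=1$. For a proper lsc convex $h$, $\operatorname{prox}_h(\mathbf x)=\arg\min_{\mathbf u}\{h(\mathbf u)+\frac12\|\mathbf u-\mathbf x\|^2\}$. BiG-SAM: for $k=1,2,\dots$ set $\mathbf y^k=\operatorname{prox}_{tg}(\mathbf x^{k-1}-t\nabla f(\mathbf x^{k-1}))$, $\mathbf z^k=\mathbf x^{k-1}-s\nabla\omega(\mathbf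 x^{k-1})$, $\mathbf x^k=\alpha_k\mathbf z^k+(1-\alpha_k)\mathbf y^k$. *)

theory Defs
  imports "HOL-Analysis.Analysis"
begin

definition proper_fun :: "('a \<Rightarrow> ereal) \<Rightarrow> bool" where
  "proper_fun g \<longleftrightarrow> (\<forall>x. g x \<noteq> -\<infinity>) \<and> (\<exists>x. g x \<noteq> \<infinity>)"

definition lsc_fun :: "('a::topological_space \<Rightarrow> ereal) \<Rightarrow> bool" where
  "lsc_fun g \<longleftrightarrow> (\<forall>x. g x \<le> Liminf (at x) g)"

definition convex_ereal_fun :: "('a::real_vector \<Rightarrow> ereal) \<Rightarrow> bool" where
  "convex_ereal_fun g \<longleftrightarrow>
     (\<forall>x y a. 0 \<le> a \<and> a \<le> 1 \<longrightarrow>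
        g (a *\<^sub>R x + (1 - a) *\<^sub>R y) \<le> ereal a * g x + ereal (1 - a) * g y)"

definition strongly_convex_fun :: "real \<Rightarrow> ('a::real_normed_vector \<Rightarrow> real) \<Rightarrow> bool" where
  "strongly_convex_fun \<sigma> w \<longleftrightarrow>
     (\<forall>x y a. 0 \<le> a \<and> a \<le> 1 \<longrightarrow>
        w (a *\<^sub>R x + (1 - a) *\<^sub>R y)
          \<le> a * w x + (1 - a) * w y - \<sigma> / 2 * a * (1 - a) * (norm (x - y))\<^sup>2)"

definition prox :: "('a::real_normed_vector \<Rightarrow> ereal) \<Rightarrow> 'a \<Rightarrow> 'a" where
  "prox h x = (SOME u. \<forall>v. h u + ereal ((norm (u - x))\<^sup>2 / 2) \<le> h v + ereal ((norm (v - x))\<^sup>2 / 2))"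

end

theory Submission
  imports Defs
begin

text \<open>The forward-backward map \<open>T = prox\<^sub>t\<^sub>g \<circ> (I - t \<nabla>f)\<close> is nonexpansive
  (firm nonexpansiveness of the prox plus the Baillon--Haddad theorem) and its fixed points are
  exactly the minimisers \<open>X\<^sup>*\<close>, while the gradient step \<open>S = I - s \<nabla>\<omega>\<close> is a contraction
  with constant \<open>\<rho> = \<bar>1 - s \<sigma>\<bar> < 1\<close>. BiG-SAM is the viscosity iteration
  \<open>x\<^sub>k\<^sub>+\<^sub>1 = \<alpha>\<^sub>k\<^sub>+\<^sub>1 S x\<^sub>k + (1 - \<alpha>\<^sub>k\<^sub>+\<^sub>1) T x\<^sub>k\<close>, which stays bounded.
  Xu's lemma applied to \<open>\<parallel>x\<^sub>k\<^sub>+\<^sub>1 - x\<^sub>k\<parallel>\<close> gives \<open>x\<^sub>k - T x\<^sub>k \<rightarrow> 0\<close>, so every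
  cluster point lies in \<open>X\<^sup>*\<close>. The variational inequality characterising the minimiser
  \<open>x\<^sup>*\<^sub>m\<^sub>n\<close> of \<open>\<omega>\<close> over \<open>X\<^sup>*\<close> then gives
  \<open>limsup \<langle>S x\<^sup>*\<^sub>m\<^sub>n - x\<^sup>*\<^sub>m\<^sub>n, x\<^sub>k - x\<^sup>*\<^sub>m\<^sub>n\<rangle> \<le> 0\<close>, and Xu's lemma
  applied to \<open>\<parallel>x\<^sub>k - x\<^sup>*\<^sub>m\<^sub>n\<parallel>\<^sup>2\<close> yields convergence.\<close>

section \<open>Smooth convex functions\<close>

lemma norm_add_square:
  fixes a b :: "'a::real_inner"
  shows "(norm (a + b))\<^sup>2 = (norm a)\<^sup>2 + 2 * (a \<bullet> b) + (norm b)\<^sup>2"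
  using dot_norm[of a b] by simp

lemma norm_diff_square:
  fixes a b :: "'a::real_inner"
  shows "(norm (a - b))\<^sup>2 = (norm a)\<^sup>2 - 2 * (a \<bullet> b) + (norm b)\<^sup>2"
  using dot_norm_neg[of a b] by simp

lemma norm_add_square_le:
  fixes u v :: "'a::real_inner"
  shows "(norm (u + v))\<^sup>2 \<le> (norm u)\<^sup>2 + 2 * (v \<bullet> (u + v))"
  using zero_le_power2[of "norm v"]
  by (simp add: norm_add_square inner_add_right power2_norm_eq_inner inner_commute)

lemma norm_convex_comb_le:
  fixes u v :: "'a::real_normed_vector"
  assumes "0 \<le> a" "a \<le> 1"
  shows "norm (a *\<^sub>R u + (1 - a) *\<^sub>R v) \<le> a * norm u + (1 - a) * norm v"
  using norm_triangle_ineq[of "a *\<^sub>R u" "(1 - a) *\<^sub>R v"] assms by simp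

lemma le_of_le_add_mult:
  fixes a b c :: real
  assumes "\<And>\<tau>. 0 < \<tau> \<Longrightarrow> \<tau> \<le> 1 \<Longrightarrow> a \<le> b + c * \<tau>"
  shows "a \<le> b"
proof (rule ccontr)
  assume "\<not> a \<le> b"
  define \<tau> where "\<tau> = min 1 ((a - b) / (2 * (\<bar>c\<bar> + 1)))"
  have \<tau>: "0 < \<tau>" "\<tau> \<le> 1" using \<open>\<not> a \<le> b\<close> by (auto simp: \<tau>_def)
  have "c * \<tau> \<le> \<bar>c\<bar> * \<tau>" using \<tau> by (simp add: mult_right_mono)
  also have "\<dots> \<le> (\<bar>c\<bar> + 1) * ((a - b) / (2 * (\<bar>c\<bar> + 1)))"
    using \<open>\<not> a \<le> b\<close> by (intro mult_mono) (auto simp: \<tau>_def)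
  also have "\<dots> = (a - b) / 2" by (simp add: field_simps)
  finally show False using assms[OF \<tau>] \<open>\<not> a \<le> b\<close> by (simp add: field_simps)
qed

definition monotone_operator :: "('a::real_inner \<Rightarrow> 'a) \<Rightarrow> bool" where
  "monotone_operator G \<longleftrightarrow> (\<forall>y z. 0 \<le> (G z - G y) \<bullet> (z - y))"

lemma lipschitz_imp_monotone_operator_shift:
  fixes G :: "'a::real_inner \<Rightarrow> 'a"
  assumes lip: "\<And>y z. norm (G y - G z) \<le> L * norm (y - z)" and "L \<le> M"
  shows "monotone_operator (\<lambda>y. M *\<^sub>R y - G y)"
  unfolding monotone_operator_def
proof (intro allI)
  fix y z :: 'a
  have "(G z - G y) \<bullet> (z - y) \<le> norm (G z - G y) * norm (z - y)"
    by (rule norm_cauchy_schwarz)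
  also have "\<dots> \<le> L * norm (z - y) * norm (z - y)"
    by (rule mult_right_mono[OF lip]) simp
  also have "\<dots> \<le> M * norm (z - y) * norm (z - y)"
    using \<open>L \<le> M\<close> by (intro mult_right_mono) auto
  finally have "(G z - G y) \<bullet> (z - y) \<le> M * ((z - y) \<bullet> (z - y))"
    by (simp add: power2_norm_eq_inner[symmetric] power2_eq_square mult.assoc)
  then show "0 \<le> ((M *\<^sub>R z - G z) - (M *\<^sub>R y - G y)) \<bullet> (z - y)"
    by (simp add: algebra_simps inner_diff_left)
qed

lemma has_real_derivative_along_line:
  fixes \<phi> :: "'a::real_inner \<Rightarrow> real"
  assumes der: "\<And>y. (\<phi> has_derivative (\<lambda>h. G y \<bullet> h)) (at y)"
  shows "((\<lambda>\<tau>. \<phi> (y + \<tau> *\<^sub>R d)) has_real_derivative (G (y + \<tau> *\<^sub>R d) \<bullet> d)) (at \<tau>)"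
proof -
  have "((\<lambda>\<tau>::real. y + \<tau> *\<^sub>R d) has_derivative (\<lambda>h. h *\<^sub>R d)) (at \<tau>)"
    by (auto intro!: derivative_eq_intros)
  from has_derivative_compose[OF this der]
  have "((\<lambda>\<tau>. \<phi> (y + \<tau> *\<^sub>R d)) has_derivative (\<lambda>h. G (y + \<tau> *\<^sub>R d) \<bullet> (h *\<^sub>R d))) (at \<tau>)"
    by (simp add: o_def)
  moreover have "(\<lambda>h. G (y + \<tau> *\<^sub>R d) \<bullet> (h *\<^sub>R d)) = (*) (G (y + \<tau> *\<^sub>R d) \<bullet> d)"
    by (auto simp: mult.commute)
  ultimately show ?thesis by (simp add: has_field_derivative_def)
qed

lemma has_derivative_diff_scaled_square:
  fixes \<phi> :: "'a::real_inner \<Rightarrow> real"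
  assumes "(\<phi> has_derivative (\<lambda>h. G \<bullet> h)) (at y)"
  shows "((\<lambda>y. \<phi> y - c / 2 * (y \<bullet> y)) has_derivative (\<lambda>h. (G - c *\<^sub>R y) \<bullet> h)) (at y)"
proof -
  have "((\<lambda>y. c / 2 * (y \<bullet> y)) has_derivative (\<lambda>h. c / 2 * (h \<bullet> y + y \<bullet> h))) (at y)"
    by (intro derivative_eq_intros) auto
  from has_derivative_diff[OF assms this]
  have "((\<lambda>y. \<phi> y - c / 2 * (y \<bullet> y)) has_derivative (\<lambda>h. G \<bullet> h - c / 2 * (h \<bullet> y + y \<bullet> h))) (at y)" .
  moreover have "(\<lambda>h. G \<bullet> h - c / 2 * (h \<bullet> y + y \<bullet> h)) = (\<lambda>h. (G - c *\<^sub>R y) \<bullet> h)"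
    by (auto simp: inner_diff_left inner_commute algebra_simps)
  ultimately show ?thesis by simp
qed

lemma above_tangent_of_convex_on_line:
  fixes \<phi> :: "'a::real_inner \<Rightarrow> real"
  assumes der: "\<And>y. (\<phi> has_derivative (\<lambda>h. G y \<bullet> h)) (at y)"
    and cv: "convex_on UNIV (\<lambda>\<tau>. \<phi> (y + \<tau> *\<^sub>R (z - y)))"
  shows "\<phi> y + G y \<bullet> (z - y) \<le> \<phi> z"
proof -
  have "((\<lambda>\<tau>. \<phi> (y + \<tau> *\<^sub>R (z - y))) has_real_derivative (G y \<bullet> (z - y))) (at 0 within UNIV)"
    using has_real_derivative_along_line[OF der, of y "z - y" 0] by simp
  from convex_on_imp_above_tangent[OF cv _ _ _ this, of 1] show ?thesis by simp
qed

lemma monotone_gradient_above_tangent: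
  fixes \<phi> :: "'a::real_inner \<Rightarrow> real"
  assumes der: "\<And>y. (\<phi> has_derivative (\<lambda>h. G y \<bullet> h)) (at y)"
    and mono: "monotone_operator G"
  shows "\<phi> y + G y \<bullet> (z - y) \<le> \<phi> z"
proof (rule above_tangent_of_convex_on_line[OF der])
  show "convex_on UNIV (\<lambda>\<tau>. \<phi> (y + \<tau> *\<^sub>R (z - y)))"
  proof (rule convex_on_realI)
    show "\<And>\<tau>. \<tau> \<in> UNIV \<Longrightarrow>
        ((\<lambda>\<tau>. \<phi> (y + \<tau> *\<^sub>R (z - y))) has_real_derivative (G (y + \<tau> *\<^sub>R (z - y)) \<bullet> (z - y))) (at \<tau>)"
      using has_real_derivative_along_line[OF der] by blast
    fix a b :: real assume "a \<le> b"
    have "0 \<le> (G (y + b *\<^sub>R (z - y)) - G (y + a *\<^sub>R (z - y))) \<bullet> ((y + b *\<^sub>R (z - y)) - (y + a *\<^sub>R (z - y)))"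
      using mono unfolding monotone_operator_def by blast
    also have "\<dots> = (b - a) * ((G (y + b *\<^sub>R (z - y)) - G (y + a *\<^sub>R (z - y))) \<bullet> (z - y))"
      by (simp add: algebra_simps inner_diff_right)
    finally show "G (y + a *\<^sub>R (z - y)) \<bullet> (z - y) \<le> G (y + b *\<^sub>R (z - y)) \<bullet> (z - y)"
      using \<open>a \<le> b\<close> by (cases "a = b") (auto simp: zero_le_mult_iff inner_diff_left)
  qed auto
qed

lemma convex_above_tangent:
  fixes \<phi> :: "'a::real_inner \<Rightarrow> real"
  assumes cv: "convex_on UNIV \<phi>" and der: "\<And>y. (\<phi> has_derivative (\<lambda>h. G y \<bullet> h)) (at y)"
  shows "\<phi> y + G y \<bullet> (z - y) \<le> \<phi> z"
proof (rule above_tangent_of_convex_on_line[OF der])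
  show "convex_on UNIV (\<lambda>\<tau>. \<phi> (y + \<tau> *\<^sub>R (z - y)))"
  proof (rule convex_onI)
    fix \<tau> a b :: real assume "0 < \<tau>" "\<tau> < 1"
    have "y + ((1 - \<tau>) *\<^sub>R a + \<tau> *\<^sub>R b) *\<^sub>R (z - y)
        = (1 - \<tau>) *\<^sub>R (y + a *\<^sub>R (z - y)) + \<tau> *\<^sub>R (y + b *\<^sub>R (z - y))"
      by (simp add: algebra_simps)
    then show "\<phi> (y + ((1 - \<tau>) *\<^sub>R a + \<tau> *\<^sub>R b) *\<^sub>R (z - y))
        \<le> (1 - \<tau>) * \<phi> (y + a *\<^sub>R (z - y)) + \<tau> * \<phi> (y + b *\<^sub>R (z - y))"
      using \<open>0 < \<tau>\<close> \<open>\<tau> < 1\<close> by (simp add: convex_onD[OF cv])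
  qed simp
qed

text \<open>Descent lemma: \<open>M/2 \<parallel>y\<parallel>\<^sup>2 - \<phi> y\<close> has the monotone gradient \<open>M y - G y\<close>.\<close>

lemma descent_lemma:
  fixes \<phi> :: "'a::real_inner \<Rightarrow> real"
  assumes der: "\<And>y. (\<phi> has_derivative (\<lambda>h. G y \<bullet> h)) (at y)"
    and mono: "monotone_operator (\<lambda>y. M *\<^sub>R y - G y)"
  shows "\<phi> z \<le> \<phi> y + G y \<bullet> (z - y) + M / 2 * (norm (z - y))\<^sup>2"
proof -
  define u where "u y = - \<phi> y - (- M) / 2 * (y \<bullet> y)" for y
  have du: "(u has_derivative (\<lambda>h. (M *\<^sub>R y - G y) \<bullet> h)) (at y)" for y
  proof -
    have "((\<lambda>y. - \<phi> y) has_derivative (\<lambda>h. (- G y) \<bullet> h)) (at y)"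
      using has_derivative_minus[OF der] by simp
    from has_derivative_diff_scaled_square[OF this, of "- M"] show ?thesis
      unfolding u_def by (simp add: algebra_simps)
  qed
  have "u y + (M *\<^sub>R y - G y) \<bullet> (z - y) \<le> u z"
    by (rule monotone_gradient_above_tangent[OF du mono])
  moreover have "M * (norm (z - y))\<^sup>2 = M * (z \<bullet> z) - 2 * M * (y \<bullet> z) + M * (y \<bullet> y)"
    by (simp add: power2_norm_eq_inner inner_diff_left inner_diff_right inner_commute algebra_simps)
  ultimately show ?thesis
    unfolding u_def by (simp add: inner_diff_right inner_diff_left inner_commute algebra_simps)
qed

text \<open>Baillon--Haddad: compare \<open>\<phi>\<close> at \<open>a\<close> and \<open>b\<close> through the point
  \<open>b - (G b - G a) /\<^sub>R M\<close>, using the tangent inequality at \<open>a\<close> and the descent lemma at \<open>b\<close>.\<close>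

lemma baillon_haddad:
  fixes \<phi> :: "'a::real_inner \<Rightarrow> real"
  assumes cv: "convex_on UNIV \<phi>" and der: "\<And>y. (\<phi> has_derivative (\<lambda>h. G y \<bullet> h)) (at y)"
    and M: "M > 0" and mono: "monotone_operator (\<lambda>y. M *\<^sub>R y - G y)"
  shows "(norm (G x - G y))\<^sup>2 \<le> M * ((G x - G y) \<bullet> (x - y))"
proof -
  have key: "\<phi> a - \<phi> b \<le> G a \<bullet> (a - b) - (norm (G a - G b))\<^sup>2 / (2 * M)" for a b
  proof -
    define e where "e = G b - G a"
    define z where "z = b - (1 / M) *\<^sub>R e"
    have "\<phi> a + G a \<bullet> (z - a) \<le> \<phi> z"
      by (rule convex_above_tangent[OF cv der])
    moreover have "G a \<bullet> (z - a) = - (G a \<bullet> (a - b)) - (G a \<bullet> e) / M"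
      by (simp add: z_def inner_diff_right)
    moreover have "\<phi> z \<le> \<phi> b + G b \<bullet> (z - b) + M / 2 * (norm (z - b))\<^sup>2"
      by (rule descent_lemma[OF der mono])
    moreover have "G b \<bullet> (z - b) = - (G a \<bullet> e) / M - (norm e)\<^sup>2 / M"
      by (simp add: z_def e_def power2_norm_eq_inner inner_diff_left diff_divide_distrib)
    moreover have "M / 2 * (norm (z - b))\<^sup>2 = (norm e)\<^sup>2 / (2 * M)"
      using M by (simp add: z_def power2_eq_square)
    moreover have "(norm e)\<^sup>2 / M = 2 * ((norm e)\<^sup>2 / (2 * M))"
      by simp
    ultimately show ?thesis by (simp add: e_def norm_minus_commute)
  qed
  have "0 \<le> (G x \<bullet> (x - y) + G y \<bullet> (y - x)) - (norm (G x - G y))\<^sup>2 / M"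
    using key[of x y] key[of y x] M by (simp add: norm_minus_commute field_simps)
  moreover have "G x \<bullet> (x - y) + G y \<bullet> (y - x) = (G x - G y) \<bullet> (x - y)"
    by (simp add: algebra_simps)
  ultimately show ?thesis using M by (simp add: field_simps)
qed

lemma gradient_step_nonexpansive:
  fixes f :: "'a::real_inner \<Rightarrow> real"
  assumes cv: "convex_on UNIV f" and der: "\<And>y. (f has_derivative (\<lambda>h. G y \<bullet> h)) (at y)"
    and L: "L > 0" and lip: "\<And>y z. norm (G y - G z) \<le> L * norm (y - z)"
    and t: "0 \<le> t" "t * L \<le> 2"
  shows "norm ((x - t *\<^sub>R G x) - (y - t *\<^sub>R G y)) \<le> norm (x - y)"
proof -
  define d where "d = x - y"
  define D where "D = G x - G y"
  have cocoercive: "(norm D)\<^sup>2 \<le> L * (D \<bullet> d)"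
    unfolding D_def d_def
    by (rule baillon_haddad[OF cv der L lipschitz_imp_monotone_operator_shift[OF lip]]) simp
  then have "0 \<le> D \<bullet> d"
    using L by (metis zero_le_power2 zero_le_mult_iff order_trans not_le order_less_imp_le)
  have "(norm (d - t *\<^sub>R D))\<^sup>2 = (norm d)\<^sup>2 - 2 * t * (D \<bullet> d) + t\<^sup>2 * (norm D)\<^sup>2"
    by (simp add: norm_diff_square power_mult_distrib inner_commute)
  also have "t\<^sup>2 * (norm D)\<^sup>2 \<le> t * (t * L) * (D \<bullet> d)"
    using mult_left_mono[OF cocoercive, of "t\<^sup>2"] by (simp add: power2_eq_square mult_ac)
  also have "t * (t * L) * (D \<bullet> d) \<le> t * 2 * (D \<bullet> d)"
    using t \<open>0 \<le> D \<bullet> d\<close> by (intro mult_right_mono mult_left_mono) auto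
  finally have "norm (d - t *\<^sub>R D) \<le> norm d" by (simp add: power2_le_iff_abs_le)
  moreover have "(x - t *\<^sub>R G x) - (y - t *\<^sub>R G y) = d - t *\<^sub>R D"
    by (simp add: d_def D_def algebra_simps)
  ultimately show ?thesis unfolding d_def by metis
qed

lemma strongly_convex_diff_square_convex:
  fixes \<omega> :: "'a::real_inner \<Rightarrow> real"
  assumes sc: "strongly_convex_fun \<sigma> \<omega>"
  shows "convex_on UNIV (\<lambda>y. \<omega> y - \<sigma> / 2 * (y \<bullet> y))"
proof (rule convex_onI)
  fix \<tau> :: real and x y :: 'a assume "0 < \<tau>" "\<tau> < 1"
  let ?m = "(1 - \<tau>) *\<^sub>R x + \<tau> *\<^sub>R y"
  have "\<omega> ?m \<le> (1 - \<tau>) * \<omega> x + \<tau> * \<omega> y - \<sigma> / 2 * ((1 - \<tau>) * \<tau> * (norm (x - y))\<^sup>2)"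
    using sc[unfolded strongly_convex_fun_def, rule_format, of "1 - \<tau>" x y] \<open>0 < \<tau>\<close> \<open>\<tau> < 1\<close>
    by (simp add: mult_ac)
  moreover have sq: "?m \<bullet> ?m = (1 - \<tau>) * (x \<bullet> x) + \<tau> * (y \<bullet> y) - (1 - \<tau>) * \<tau> * (norm (x - y))\<^sup>2"
    by (simp add: power2_norm_eq_inner algebra_simps inner_commute)
  ultimately show "\<omega> ?m - \<sigma> / 2 * (?m \<bullet> ?m)
      \<le> (1 - \<tau>) * (\<omega> x - \<sigma> / 2 * (x \<bullet> x)) + \<tau> * (\<omega> y - \<sigma> / 2 * (y \<bullet> y))"
    unfolding sq by (simp add: algebra_simps diff_divide_distrib)
qed simp

lemma strongly_convex_above_tangent:
  fixes \<omega> :: "'a::real_inner \<Rightarrow> real"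
  assumes sc: "strongly_convex_fun \<sigma> \<omega>" and der: "\<And>y. (\<omega> has_derivative (\<lambda>h. G y \<bullet> h)) (at y)"
  shows "\<omega> y + G y \<bullet> (z - y) + \<sigma> / 2 * (norm (z - y))\<^sup>2 \<le> \<omega> z"
proof -
  have "(\<omega> y - \<sigma> / 2 * (y \<bullet> y)) + (G y - \<sigma> *\<^sub>R y) \<bullet> (z - y) \<le> \<omega> z - \<sigma> / 2 * (z \<bullet> z)"
    by (rule convex_above_tangent[OF strongly_convex_diff_square_convex[OF sc]
          has_derivative_diff_scaled_square[OF der]])
  moreover have "\<sigma> / 2 * (norm (z - y))\<^sup>2 = \<sigma> / 2 * (z \<bullet> z) - \<sigma> * (y \<bullet> z) + \<sigma> / 2 * (y \<bullet> y)"
    by (simp add: power2_norm_eq_inner inner_diff_left inner_diff_right inner_commute algebra_simps)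
  ultimately show ?thesis by (simp add: inner_diff_left inner_diff_right inner_commute algebra_simps)
qed

text \<open>The shifted gradient of \<open>\<omega> - \<sigma>/2 \<parallel>\<cdot>\<parallel>\<^sup>2\<close> satisfies the hypothesis of the
  Baillon--Haddad theorem for every \<open>M \<ge> L - \<sigma>\<close>, which may be smaller than \<open>L\<close>.\<close>

lemma strongly_convex_shifted_gradient_cocoercive:
  fixes \<omega> :: "'a::real_inner \<Rightarrow> real"
  assumes sc: "strongly_convex_fun \<sigma> \<omega>"
    and der: "\<And>y. (\<omega> has_derivative (\<lambda>h. G y \<bullet> h)) (at y)"
    and lip: "\<And>y z. norm (G y - G z) \<le> L * norm (y - z)"
    and "0 < M" "L - \<sigma> \<le> M"
  shows "(norm ((G x - \<sigma> *\<^sub>R x) - (G y - \<sigma> *\<^sub>R y)))\<^sup>2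
      \<le> M * (((G x - \<sigma> *\<^sub>R x) - (G y - \<sigma> *\<^sub>R y)) \<bullet> (x - y))"
proof (rule baillon_haddad[OF strongly_convex_diff_square_convex[OF sc]
      has_derivative_diff_scaled_square[OF der] \<open>0 < M\<close>])
  have "(\<lambda>y. (M + \<sigma>) *\<^sub>R y - G y) = (\<lambda>y. M *\<^sub>R y - (G y - \<sigma> *\<^sub>R y))"
    by (auto simp: algebra_simps)
  then show "monotone_operator (\<lambda>y. M *\<^sub>R y - (G y - \<sigma> *\<^sub>R y))"
    using lipschitz_imp_monotone_operator_shift[OF lip, of "M + \<sigma>"] \<open>L - \<sigma> \<le> M\<close> by simp
qed

lemma strongly_convex_gradient_step_contraction:
  fixes \<omega> :: "'a::real_inner \<Rightarrow> real"
  assumes sc: "strongly_convex_fun \<sigma> \<omega>"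
    and der: "\<And>y. (\<omega> has_derivative (\<lambda>h. G y \<bullet> h)) (at y)"
    and \<sigma>: "\<sigma> > 0" and L: "L > 0" and lip: "\<And>y z. norm (G y - G z) \<le> L * norm (y - z)"
    and s: "0 < s" "s \<le> 2 / (L + \<sigma>)"
  shows "norm ((x - s *\<^sub>R G x) - (y - s *\<^sub>R G y)) \<le> \<bar>1 - s * \<sigma>\<bar> * norm (x - y)"
proof -
  define d where "d = x - y"
  define e where "e = (G x - \<sigma> *\<^sub>R x) - (G y - \<sigma> *\<^sub>R y)"
  have cocoercive: "(norm e)\<^sup>2 \<le> M * (e \<bullet> d)" if "0 < M" "L - \<sigma> \<le> M" for M
    unfolding e_def d_def by (rule strongly_convex_shifted_gradient_cocoercive[OF sc der lip that])
  have "0 \<le> e \<bullet> d"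
  proof -
    have M: "0 < max 1 (L - \<sigma>)" by simp
    have "0 \<le> max 1 (L - \<sigma>) * (e \<bullet> d)"
      using cocoercive[OF M max.cobounded2] zero_le_power2[of "norm e"] by linarith
    then show ?thesis using M by (simp add: zero_le_mult_iff)
  qed
  have key: "s\<^sup>2 * (norm e)\<^sup>2 \<le> s * (2 - 2 * s * \<sigma>) * (e \<bullet> d)"
  proof (cases "L - \<sigma> > 0")
    case True
    have "s * (L + \<sigma>) \<le> 2" using s L \<sigma> by (simp add: field_simps)
    then have "s * (L - \<sigma>) \<le> 2 - 2 * s * \<sigma>" by (simp add: algebra_simps)
    have "s\<^sup>2 * (norm e)\<^sup>2 \<le> s * (s * (L - \<sigma>)) * (e \<bullet> d)"
      using mult_left_mono[OF cocoercive[of "L - \<sigma>"], of "s\<^sup>2"] True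
      by (simp add: power2_eq_square mult_ac)
    also have "\<dots> \<le> s * (2 - 2 * s * \<sigma>) * (e \<bullet> d)"
      using \<open>s * (L - \<sigma>) \<le> 2 - 2 * s * \<sigma>\<close> s \<open>0 \<le> e \<bullet> d\<close>
      by (intro mult_right_mono mult_left_mono) auto
    finally show ?thesis .
  next
    case False
    have "(norm e)\<^sup>2 \<le> 0"
      by (rule le_of_le_add_mult[of _ 0 "e \<bullet> d"]) (use cocoercive False in \<open>simp add: mult.commute\<close>)
    then show ?thesis using \<open>0 \<le> e \<bullet> d\<close> s by simp
  qed
  have "(norm ((1 - s * \<sigma>) *\<^sub>R d - s *\<^sub>R e))\<^sup>2
      = (1 - s * \<sigma>)\<^sup>2 * (norm d)\<^sup>2 - 2 * (1 - s * \<sigma>) * s * (e \<bullet> d) + s\<^sup>2 * (norm e)\<^sup>2"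
    by (simp add: norm_diff_square power_mult_distrib inner_commute)
  also have "\<dots> \<le> (\<bar>1 - s * \<sigma>\<bar> * norm d)\<^sup>2"
    using key by (simp add: power_mult_distrib algebra_simps)
  finally have "norm ((1 - s * \<sigma>) *\<^sub>R d - s *\<^sub>R e) \<le> \<bar>1 - s * \<sigma>\<bar> * norm d"
    by (rule power2_le_imp_le) simp
  moreover have "(x - s *\<^sub>R G x) - (y - s *\<^sub>R G y) = (1 - s * \<sigma>) *\<^sub>R d - s *\<^sub>R e"
    by (simp add: d_def e_def algebra_simps)
  ultimately show ?thesis unfolding d_def by simp
qed

section \<open>Xu's lemma\<close>

lemma eventually_less_of_not_summable_decay:
  fixes b \<gamma> :: "nat \<Rightarrow> real"
  assumes b0: "\<And>k. 0 \<le> b k" and \<gamma>: "\<And>k. 0 < \<gamma> k" and ns: "\<not> summable \<gamma>"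
    and decay: "\<And>k. N \<le> k \<Longrightarrow> b (Suc k) \<le> (1 - \<gamma> k) * b k" and "0 < \<epsilon>"
  shows "eventually (\<lambda>k. b k < \<epsilon>) sequentially"
proof -
  have mono: "b (Suc k) \<le> b k" if "N \<le> k" for k
    using decay[OF that] mult_nonneg_nonneg[OF less_imp_le[OF \<gamma>[of k]] b0[of k]]
    by (simp add: algebra_simps)
  have "\<exists>k\<ge>N. b k < \<epsilon>"
  proof (rule ccontr)
    assume "\<not> ?thesis"
    then have big: "\<epsilon> \<le> b k" if "N \<le> k" for k using that by force
    have partial: "b (N + n) \<le> b N - \<epsilon> * (\<Sum>i<n. \<gamma> (i + N))" for n
    proof (induction n)
      case (Suc n)
      have "\<gamma> (N + n) * \<epsilon> \<le> \<gamma> (N + n) * b (N + n)"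
        using big[of "N + n"] \<gamma>[of "N + n"] by (intro mult_left_mono) auto
      then show ?case
        using decay[of "N + n"] Suc.IH by (simp add: algebra_simps add.commute)
    qed simp
    have "summable (\<lambda>i. \<gamma> (i + N))"
    proof (rule summableI_nonneg_bounded[where x = "b N / \<epsilon>"])
      show "(\<Sum>i<n. \<gamma> (i + N)) \<le> b N / \<epsilon>" for n
        using partial[of n] b0[of "N + n"] \<open>0 < \<epsilon>\<close> by (simp add: field_simps mult.commute)
    qed (use \<gamma> in \<open>simp add: less_imp_le\<close>)
    then show False using ns by (simp add: summable_iff_shift)
  qed
  then obtain k0 where "N \<le> k0" "b k0 < \<epsilon>" by blast
  have "b k < \<epsilon>" if "k0 \<le> k" for k
    using that
  proof (induction k rule: dec_induct)
    case (step k)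
    then show ?case using mono[of k] \<open>N \<le> k0\<close> by simp
  qed (rule \<open>b k0 < \<epsilon>\<close>)
  then show ?thesis unfolding eventually_sequentially by blast
qed

lemma xu_lemma:
  fixes a \<gamma> \<delta> :: "nat \<Rightarrow> real"
  assumes a0: "\<And>k. 0 \<le> a k"
    and \<gamma>: "\<And>k. 0 < \<gamma> k" "\<And>k. \<gamma> k \<le> 1" and ns: "\<not> summable \<gamma>"
    and \<delta>: "\<And>\<epsilon>. 0 < \<epsilon> \<Longrightarrow> eventually (\<lambda>k. \<delta> k \<le> \<epsilon>) sequentially"
    and rec: "\<And>k. a (Suc k) \<le> (1 - \<gamma> k) * a k + \<gamma> k * \<delta> k"
  shows "a \<longlonglongrightarrow> 0"
proof (rule order_tendstoI)
  fix e :: real assume "e < 0"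
  then show "eventually (\<lambda>k. e < a k) sequentially"
    using a0 by (intro always_eventually allI) (blast intro: order_less_le_trans)
next
  fix e :: real assume "0 < e"
  define \<epsilon> where "\<epsilon> = e / 2"
  have "0 < \<epsilon>" using \<open>0 < e\<close> by (simp add: \<epsilon>_def)
  obtain N where N: "\<And>k. N \<le> k \<Longrightarrow> \<delta> k \<le> \<epsilon>"
    using \<delta>[OF \<open>0 < \<epsilon>\<close>] unfolding eventually_sequentially by blast
  define b where "b k = max (a k - \<epsilon>) 0" for k
  have decay: "b (Suc k) \<le> (1 - \<gamma> k) * b k" if "N \<le> k" for k
  proof -
    have "\<gamma> k * \<delta> k \<le> \<gamma> k * \<epsilon>"
      using N[OF that] \<gamma>(1)[of k] by (simp add: mult_left_mono)
    then have "a (Suc k) - \<epsilon> \<le> (1 - \<gamma> k) * (a k - \<epsilon>)"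
      using rec[of k] by (simp add: algebra_simps)
    also have "\<dots> \<le> (1 - \<gamma> k) * b k"
      using \<gamma>(2)[of k] unfolding b_def by (intro mult_left_mono) auto
    finally show ?thesis
      using \<gamma>(2)[of k] unfolding b_def by (simp add: mult_nonneg_nonneg)
  qed
  have "eventually (\<lambda>k. b k < \<epsilon>) sequentially"
    by (rule eventually_less_of_not_summable_decay[OF _ \<gamma>(1) ns decay \<open>0 < \<epsilon>\<close>]) (simp add: b_def)
  then show "eventually (\<lambda>k. a k < e) sequentially"
    by eventually_elim (simp add: b_def \<epsilon>_def max_def split: if_splits)
qed

section \<open>The proximal operator\<close>

locale prox_setting =
  fixes g :: "'a::euclidean_space \<Rightarrow> ereal" and t :: real
  assumes proper: "proper_fun g" and lsc: "lsc_fun g" and convex: "convex_ereal_fun g"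
    and t_pos: "0 < t"
begin

definition Dom :: "'a set" where "Dom = {u. g u \<noteq> \<infinity>}"

text \<open>\<open>G\<close> is the real-valued version of \<open>g\<close>; outside \<open>Dom\<close> it takes the junk value \<open>0\<close>.\<close>

definition G :: "'a \<Rightarrow> real" where "G u = real_of_ereal (g u)"

definition prox_obj :: "'a \<Rightarrow> 'a \<Rightarrow> real" where
  "prox_obj z u = t * G u + (norm (u - z))\<^sup>2 / 2"

lemma Dom_nonempty: "Dom \<noteq> {}"
  using proper unfolding proper_fun_def Dom_def by auto

lemma g_eq_G: "u \<in> Dom \<Longrightarrow> g u = ereal (G u)"
  using proper unfolding proper_fun_def Dom_def G_def by (cases "g u") auto

lemma g_eq_infinity: "u \<notin> Dom \<Longrightarrow> g u = \<infinity>"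
  unfolding Dom_def by simp

lemma G_segment:
  assumes "u \<in> Dom" "v \<in> Dom" "0 \<le> \<tau>" "\<tau> \<le> 1"
  shows "u + \<tau> *\<^sub>R (v - u) \<in> Dom" and "G (u + \<tau> *\<^sub>R (v - u)) \<le> (1 - \<tau>) * G u + \<tau> * G v"
proof -
  have eq: "u + \<tau> *\<^sub>R (v - u) = \<tau> *\<^sub>R v + (1 - \<tau>) *\<^sub>R u"
    by (simp add: algebra_simps)
  have "g (u + \<tau> *\<^sub>R (v - u)) \<le> ereal \<tau> * g v + ereal (1 - \<tau>) * g u"
    unfolding eq using convex assms(3,4) unfolding convex_ereal_fun_def by blast
  also have "\<dots> = ereal ((1 - \<tau>) * G u + \<tau> * G v)"
    using g_eq_G[OF assms(1)] g_eq_G[OF assms(2)] by simp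
  finally have le: "g (u + \<tau> *\<^sub>R (v - u)) \<le> ereal ((1 - \<tau>) * G u + \<tau> * G v)" .
  then show in_Dom: "u + \<tau> *\<^sub>R (v - u) \<in> Dom" unfolding Dom_def by auto
  show "G (u + \<tau> *\<^sub>R (v - u)) \<le> (1 - \<tau>) * G u + \<tau> * G v"
    using le g_eq_G[OF in_Dom] by simp
qed

lemma lsc_seq_le:
  assumes u: "u \<longlonglongrightarrow> p" and le: "\<And>n. g (u n) \<le> ereal (b n)" and b: "b \<longlonglongrightarrow> \<beta>"
  shows "g p \<le> ereal \<beta>"
proof (rule dense_le)
  fix y assume "y < g p"
  show "y \<le> ereal \<beta>"
  proof (cases y)
    case (real r)
    have "y < Liminf (at p) g"
      using lsc \<open>y < g p\<close> order_less_le_trans unfolding lsc_fun_def by blast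
    then have "eventually (\<lambda>w. y < g w) (at p)" by (rule less_LiminfD)
    then obtain \<delta> where "0 < \<delta>" and \<delta>: "\<And>w. w \<noteq> p \<Longrightarrow> dist w p < \<delta> \<Longrightarrow> y < g w"
      unfolding eventually_at by auto
    have "eventually (\<lambda>n. dist (u n) p < \<delta>) sequentially"
      using u \<open>0 < \<delta>\<close> unfolding tendsto_iff by blast
    then have "eventually (\<lambda>n. r \<le> b n) sequentially"
    proof eventually_elim
      case (elim n)
      then have "y < g (u n)" using \<delta> \<open>y < g p\<close> by (cases "u n = p") auto
      then have "y < ereal (b n)" using le[of n] by (rule order_less_le_trans)
      then show ?case using real by simp
    qed
    then show ?thesis using real tendsto_lowerbound[OF b] by simp
  qed (use \<open>y < g p\<close> in auto)
qed

lemma prox_obj_coercive: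
  assumes minor: "\<And>u. ereal (c + q \<bullet> u) \<le> g u" and "u \<in> Dom"
  shows "t * c + t * (q \<bullet> z) - (t * norm q)\<^sup>2 + (norm (u - z))\<^sup>2 / 4 \<le> prox_obj z u"
proof -
  have "c + q \<bullet> u \<le> G u" using minor[of u] g_eq_G[OF \<open>u \<in> Dom\<close>] by simp
  moreover have "q \<bullet> u = q \<bullet> z + q \<bullet> (u - z)" by (simp add: inner_diff_right)
  moreover have "- (norm q * norm (u - z)) \<le> q \<bullet> (u - z)"
    using norm_cauchy_schwarz[of "- q" "u - z"] by simp
  ultimately have "t * (c + q \<bullet> z - norm q * norm (u - z)) \<le> t * G u"
    using t_pos by (intro mult_left_mono) auto
  moreover have "t * norm q * norm (u - z) \<le> (t * norm q)\<^sup>2 + (norm (u - z))\<^sup>2 / 4"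
  proof -
    have "0 \<le> (t * norm q - norm (u - z) / 2)\<^sup>2" by simp
    then show ?thesis by (simp add: power2_diff power_divide algebra_simps)
  qed
  ultimately show ?thesis
    unfolding prox_obj_def by (simp add: algebra_simps)
qed

lemma prox_obj_sublevel_bounded:
  assumes minor: "\<And>u. ereal (c + q \<bullet> u) \<le> g u"
  shows "bounded {u \<in> Dom. prox_obj z u \<le> \<beta>}"
proof -
  define K where "K = t * c + t * (q \<bullet> z) - (t * norm q)\<^sup>2"
  define C where "C = max 1 (4 * (\<beta> - K))"
  have "norm (u - z) \<le> C" if "u \<in> Dom" "prox_obj z u \<le> \<beta>" for u
  proof (cases "norm (u - z) \<le> 1")
    case False
    have "norm (u - z) \<le> (norm (u - z))\<^sup>2"
      using False mult_left_mono[of 1 "norm (u - z)" "norm (u - z)"] by (simp add: power2_eq_square)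
    moreover have "(norm (u - z))\<^sup>2 / 4 \<le> \<beta> - K"
      using prox_obj_coercive[OF minor \<open>u \<in> Dom\<close>, of z] that(2) unfolding K_def by simp
    then have "(norm (u - z))\<^sup>2 \<le> 4 * (\<beta> - K)" by simp
    ultimately have "norm (u - z) \<le> 4 * (\<beta> - K)" by (rule order_trans)
    then show ?thesis unfolding C_def by simp
  qed (simp add: C_def)
  then show ?thesis
    unfolding bounded_iff
    by (intro exI[of _ "norm z + C"]) (auto intro: order_trans[OF norm_triangle_sub[of _ z]])
qed

lemma prox_obj_attains_min:
  assumes minor: "\<And>u. ereal (c + q \<bullet> u) \<le> g u"
  shows "\<exists>p\<in>Dom. \<forall>v\<in>Dom. prox_obj z p \<le> prox_obj z v"
proof -
  define m where "m = Inf (prox_obj z ` Dom)"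
  have "t * c + t * (q \<bullet> z) - (t * norm q)\<^sup>2 \<le> prox_obj z u" if "u \<in> Dom" for u
    using prox_obj_coercive[OF minor that, of z] zero_le_power2[of "norm (u - z)"] by linarith
  then have "bdd_below (prox_obj z ` Dom)" by (intro bdd_belowI) blast
  then have m_le: "m \<le> prox_obj z v" if "v \<in> Dom" for v
    unfolding m_def using that by (simp add: cInf_lower)
  have "\<exists>u\<in>Dom. prox_obj z u < m + inverse (Suc n)" for n :: nat
    using cInf_lessD[of "prox_obj z ` Dom" "m + inverse (Suc n)"] Dom_nonempty
    unfolding m_def by auto
  then obtain u where u_Dom: "\<And>n. u n \<in> Dom"
    and u_less: "\<And>n. prox_obj z (u n) < m + inverse (Suc n)" by metis
  have "prox_obj z (u n) \<le> m + 1" for n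
  proof -
    have "inverse (real (Suc n)) \<le> 1" by (simp add: inverse_le_1_iff)
    then show ?thesis using u_less[of n] by simp
  qed
  then have "range u \<subseteq> {u \<in> Dom. prox_obj z u \<le> m + 1}" using u_Dom by blast
  then have "bounded (range u)"
    by (rule bounded_subset[OF prox_obj_sublevel_bounded[OF minor]])
  then obtain p r where r: "strict_mono r" and ur: "(u \<circ> r) \<longlonglongrightarrow> p"
    using bounded_imp_convergent_subsequence by blast
  define b where "b n = (m + inverse (Suc (r n)) - (norm (u (r n) - z))\<^sup>2 / 2) / t" for n
  have "g ((u \<circ> r) n) \<le> ereal (b n)" for n
  proof -
    have "t * G (u (r n)) \<le> m + inverse (Suc (r n)) - (norm (u (r n) - z))\<^sup>2 / 2"
      using u_less[of "r n"] unfolding prox_obj_def by simp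
    then have "G (u (r n)) \<le> b n"
      unfolding b_def using t_pos by (simp add: pos_le_divide_eq mult.commute)
    then show ?thesis using g_eq_G[OF u_Dom[of "r n"]] by simp
  qed
  moreover have "b \<longlonglongrightarrow> (m + 0 - (norm (p - z))\<^sup>2 / 2) / t"
    using LIMSEQ_subseq_LIMSEQ[OF LIMSEQ_inverse_real_of_nat r] ur t_pos
    unfolding b_def o_def by (intro tendsto_intros) auto
  ultimately have gp: "g p \<le> ereal ((m - (norm (p - z))\<^sup>2 / 2) / t)"
    using lsc_seq_le[OF ur] by (metis add_0_right)
  then have "p \<in> Dom" unfolding Dom_def by auto
  moreover have "prox_obj z p \<le> m"
    using gp g_eq_G[OF \<open>p \<in> Dom\<close>] t_pos unfolding prox_obj_def by (simp add: field_simps)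
  ultimately show ?thesis using m_le by force
qed

lemma ereal_prox_obj:
  "ereal t * g u + ereal ((norm (u - z))\<^sup>2 / 2) = (if u \<in> Dom then ereal (prox_obj z u) else \<infinity>)"
  using t_pos g_eq_G[of u] g_eq_infinity[of u] unfolding prox_obj_def by simp

lemma prox_minimizes:
  assumes minor: "\<And>u. ereal (c + q \<bullet> u) \<le> g u"
  shows "prox (\<lambda>u. ereal t * g u) z \<in> Dom"
    and "\<And>v. v \<in> Dom \<Longrightarrow> prox_obj z (prox (\<lambda>u. ereal t * g u) z) \<le> prox_obj z v"
proof -
  define p where "p = prox (\<lambda>u. ereal t * g u) z"
  obtain p0 where "p0 \<in> Dom" "\<forall>v\<in>Dom. prox_obj z p0 \<le> prox_obj z v"
    using prox_obj_attains_min[OF minor] by blast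
  then have "\<forall>v. ereal t * g p0 + ereal ((norm (p0 - z))\<^sup>2 / 2) \<le> ereal t * g v + ereal ((norm (v - z))\<^sup>2 / 2)"
    by (simp add: ereal_prox_obj)
  then have p_min: "ereal t * g p + ereal ((norm (p - z))\<^sup>2 / 2) \<le> ereal t * g v + ereal ((norm (v - z))\<^sup>2 / 2)" for v
    unfolding p_def prox_def by (rule someI2) blast
  obtain v0 where "v0 \<in> Dom" using Dom_nonempty by blast
  show "p \<in> Dom"
    using p_min[of v0] \<open>v0 \<in> Dom\<close> by (auto simp: ereal_prox_obj split: if_splits)
  then show "prox_obj z p \<le> prox_obj z v" if "v \<in> Dom" for v
    using p_min[of v] that by (simp add: ereal_prox_obj)
qed

text \<open>First-order condition for a minimiser of the proximal objective, obtained by comparing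
  with the points of the segment towards \<open>v\<close> and letting the step tend to \<open>0\<close>.\<close>

lemma prox_obj_min_vi:
  assumes "p \<in> Dom" and min: "\<And>v. v \<in> Dom \<Longrightarrow> prox_obj z p \<le> prox_obj z v" and "v \<in> Dom"
  shows "t * G p + (z - p) \<bullet> (v - p) \<le> t * G v"
proof -
  have "t * G p \<le> t * G v + (p - z) \<bullet> (v - p) + (norm (v - p))\<^sup>2 / 2 * \<tau>"
    if "0 < \<tau>" "\<tau> \<le> 1" for \<tau>
  proof -
    define w where "w = p + \<tau> *\<^sub>R (v - p)"
    define A where "A = (p - z) \<bullet> (v - p)"
    define N where "N = (norm (v - p))\<^sup>2"
    have "w \<in> Dom" and Gw: "G w \<le> (1 - \<tau>) * G p + \<tau> * G v"
      using G_segment[OF \<open>p \<in> Dom\<close> \<open>v \<in> Dom\<close>] that unfolding w_def by auto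
    have wz: "w - z = (p - z) + \<tau> *\<^sub>R (v - p)" unfolding w_def by simp
    have "(norm (w - z))\<^sup>2 = (norm (p - z))\<^sup>2 + 2 * (\<tau> * A) + \<tau>\<^sup>2 * N"
      unfolding wz A_def N_def by (simp add: norm_add_square power_mult_distrib)
    moreover have "t * G w \<le> t * ((1 - \<tau>) * G p + \<tau> * G v)"
      using Gw t_pos by simp
    ultimately have "t * G p \<le> t * ((1 - \<tau>) * G p + \<tau> * G v) + \<tau> * A + \<tau>\<^sup>2 * N / 2"
      using min[OF \<open>w \<in> Dom\<close>] unfolding prox_obj_def by linarith
    then have "\<tau> * (t * G p) \<le> \<tau> * (t * G v + A + N / 2 * \<tau>)"
      by (simp add: algebra_simps power2_eq_square)
    then show ?thesis using that unfolding A_def N_def by simp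
  qed
  then have "t * G p \<le> t * G v + (p - z) \<bullet> (v - p)" by (rule le_of_le_add_mult)
  then show ?thesis by (simp add: inner_diff_left)
qed

end

section \<open>The bilevel problem\<close>

locale bilevel_problem = prox_setting g t
  for g :: "'a::euclidean_space \<Rightarrow> ereal" and t :: real +
  fixes f :: "'a \<Rightarrow> real" and grad_f :: "'a \<Rightarrow> 'a" and L_f :: real
    and \<omega> :: "'a \<Rightarrow> real" and grad_\<omega> :: "'a \<Rightarrow> 'a" and \<sigma> L_\<omega> s :: real
  assumes f_convex: "convex_on UNIV f"
    and f_grad: "\<And>y. (f has_derivative (\<lambda>h. grad_f y \<bullet> h)) (at y)"
    and L_f_pos: "0 < L_f"
    and f_lip: "\<And>y z. norm (grad_f y - grad_f z) \<le> L_f * norm (y - z)"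
    and minimizers_nonempty: "{y. \<forall>z. ereal (f y) + g y \<le> ereal (f z) + g z} \<noteq> {}"
    and \<sigma>_pos: "0 < \<sigma>"
    and \<omega>_sc: "strongly_convex_fun \<sigma> \<omega>"
    and \<omega>_grad: "\<And>y. (\<omega> has_derivative (\<lambda>h. grad_\<omega> y \<bullet> h)) (at y)"
    and L_\<omega>_pos: "0 < L_\<omega>"
    and \<omega>_lip: "\<And>y z. norm (grad_\<omega> y - grad_\<omega> z) \<le> L_\<omega> * norm (y - z)"
    and t_le: "t \<le> 1 / L_f"
    and s_range: "0 < s" "s \<le> 2 / (L_\<omega> + \<sigma>)"
begin

definition Xs :: "'a set" where "Xs = {y. \<forall>z. ereal (f y) + g y \<le> ereal (f z) + g z}"

definition T :: "'a \<Rightarrow> 'a" where "T u = prox (\<lambda>u. ereal t * g u) (u - t *\<^sub>R grad_f u)"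

definition S :: "'a \<Rightarrow> 'a" where "S u = u - s *\<^sub>R grad_\<omega> u"

definition \<rho> :: real where "\<rho> = \<bar>1 - s * \<sigma>\<bar>"

lemma Xs_iff: "y \<in> Xs \<longleftrightarrow> y \<in> Dom \<and> (\<forall>z\<in>Dom. f y + G y \<le> f z + G z)"
proof
  assume y: "y \<in> Xs"
  obtain z0 where "z0 \<in> Dom" using Dom_nonempty by blast
  have "ereal (f y) + g y \<le> ereal (f z0) + g z0" using y unfolding Xs_def by blast
  then have "y \<in> Dom" using g_eq_G[OF \<open>z0 \<in> Dom\<close>] g_eq_infinity[of y] by (cases "y \<in> Dom") auto
  moreover have "f y + G y \<le> f z + G z" if "z \<in> Dom" for z
  proof -
    have "ereal (f y) + g y \<le> ereal (f z) + g z" using y unfolding Xs_def by blast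
    then show ?thesis using g_eq_G[OF that] g_eq_G[OF \<open>y \<in> Dom\<close>] by simp
  qed
  ultimately show "y \<in> Dom \<and> (\<forall>z\<in>Dom. f y + G y \<le> f z + G z)" by blast
next
  assume y: "y \<in> Dom \<and> (\<forall>z\<in>Dom. f y + G y \<le> f z + G z)"
  have "ereal (f y) + g y \<le> ereal (f z) + g z" for z
    using y g_eq_G[of y] g_eq_G[of z] g_eq_infinity[of z] by (cases "z \<in> Dom") auto
  then show "y \<in> Xs" unfolding Xs_def by blast
qed

lemma Xs_nonempty: "Xs \<noteq> {}"
  using minimizers_nonempty unfolding Xs_def .

lemma Xs_first_order:
  assumes "y \<in> Xs" "u \<in> Dom"
  shows "G y \<le> G u + grad_f y \<bullet> (u - y)"
proof -
  have "y \<in> Dom" and y_min: "\<And>z. z \<in> Dom \<Longrightarrow> f y + G y \<le> f z + G z"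
    using \<open>y \<in> Xs\<close> Xs_iff by auto
  have "G y \<le> G u + grad_f y \<bullet> (u - y) + L_f / 2 * (norm (u - y))\<^sup>2 * \<tau>"
    if "0 < \<tau>" "\<tau> \<le> 1" for \<tau>
  proof -
    define v where "v = y + \<tau> *\<^sub>R (u - y)"
    have "v \<in> Dom" and Gv: "G v \<le> (1 - \<tau>) * G y + \<tau> * G u"
      using G_segment[OF \<open>y \<in> Dom\<close> \<open>u \<in> Dom\<close>] that unfolding v_def by auto
    have "f v \<le> f y + \<tau> * (grad_f y \<bullet> (u - y)) + L_f / 2 * \<tau>\<^sup>2 * (norm (u - y))\<^sup>2"
      using descent_lemma[OF f_grad lipschitz_imp_monotone_operator_shift[OF f_lip order_refl], of v y]
      unfolding v_def by (simp add: power_mult_distrib)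
    then have "\<tau> * G y \<le> \<tau> * (G u + grad_f y \<bullet> (u - y) + L_f / 2 * (norm (u - y))\<^sup>2 * \<tau>)"
      using y_min[OF \<open>v \<in> Dom\<close>] Gv by (simp add: algebra_simps power2_eq_square)
    then show ?thesis using that by simp
  qed
  then show ?thesis by (rule le_of_le_add_mult)
qed

lemma g_affine_minorant: "\<exists>c q. \<forall>u. ereal (c + q \<bullet> u) \<le> g u"
proof -
  obtain y where "y \<in> Xs" using Xs_nonempty by blast
  have "ereal ((G y + grad_f y \<bullet> y) + (- grad_f y) \<bullet> u) \<le> g u" for u
  proof (cases "u \<in> Dom")
    case True
    then show ?thesis
      using Xs_first_order[OF \<open>y \<in> Xs\<close> True] g_eq_G[OF True] by (simp add: inner_diff_right)
  qed (simp add: g_eq_infinity)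
  then show ?thesis by blast
qed

lemma T_in_Dom: "T u \<in> Dom"
  using g_affine_minorant prox_minimizes(1) unfolding T_def by blast

lemma T_vi: "v \<in> Dom \<Longrightarrow> t * G (T u) + ((u - t *\<^sub>R grad_f u) - T u) \<bullet> (v - T u) \<le> t * G v"
  using g_affine_minorant prox_minimizes prox_obj_min_vi unfolding T_def by metis

text \<open>Firm nonexpansiveness of the prox, combined with nonexpansiveness of the gradient step
  (Baillon--Haddad, using \<open>t \<le> 1 / L\<^sub>f\<close>).\<close>

lemma T_nonexpansive: "norm (T u1 - T u2) \<le> norm (u1 - u2)"
proof -
  define z1 where "z1 = u1 - t *\<^sub>R grad_f u1"
  define z2 where "z2 = u2 - t *\<^sub>R grad_f u2"
  define d where "d = T u1 - T u2"
  have "t * G (T u1) + (z1 - T u1) \<bullet> (T u2 - T u1) \<le> t * G (T u2)"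
    unfolding z1_def by (rule T_vi[OF T_in_Dom])
  moreover have "t * G (T u2) + (z2 - T u2) \<bullet> (T u1 - T u2) \<le> t * G (T u1)"
    unfolding z2_def by (rule T_vi[OF T_in_Dom])
  moreover have "(z1 - T u1) \<bullet> (T u2 - T u1) + (z2 - T u2) \<bullet> (T u1 - T u2) = d \<bullet> d - (z1 - z2) \<bullet> d"
    unfolding d_def by (simp add: inner_diff_left inner_diff_right algebra_simps)
  ultimately have "(norm d)\<^sup>2 \<le> (z1 - z2) \<bullet> d"
    by (simp add: power2_norm_eq_inner)
  also have "\<dots> \<le> norm (z1 - z2) * norm d" by (rule norm_cauchy_schwarz)
  finally have "norm d \<le> norm (z1 - z2)"
    by (cases "norm d = 0") (auto simp: power2_eq_square)
  also have "norm (z1 - z2) \<le> norm (u1 - u2)"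
    unfolding z1_def z2_def
  proof (rule gradient_step_nonexpansive[OF f_convex f_grad L_f_pos f_lip])
    show "0 \<le> t" using t_pos by simp
    show "t * L_f \<le> 2" using t_le L_f_pos by (simp add: field_simps)
  qed
  finally show ?thesis unfolding d_def .
qed

lemma T_fixed_iff: "T y = y \<longleftrightarrow> y \<in> Xs"
proof
  assume "T y = y"
  have "f y + G y \<le> f v + G v" if "v \<in> Dom" for v
  proof -
    have "t * (G y - grad_f y \<bullet> (v - y)) \<le> t * G v"
      using T_vi[OF that, of y] \<open>T y = y\<close> by (simp add: algebra_simps)
    then have "G y - grad_f y \<bullet> (v - y) \<le> G v" using t_pos by simp
    moreover have "f y + grad_f y \<bullet> (v - y) \<le> f v" by (rule convex_above_tangent[OF f_convex f_grad])
    ultimately show ?thesis by linarith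
  qed
  moreover have "y \<in> Dom" using T_in_Dom[of y] \<open>T y = y\<close> by simp
  ultimately show "y \<in> Xs" using Xs_iff by blast
next
  assume "y \<in> Xs"
  define p where "p = T y"
  have "t * G p + ((y - t *\<^sub>R grad_f y) - p) \<bullet> (y - p) \<le> t * G y"
    unfolding p_def by (rule T_vi) (use \<open>y \<in> Xs\<close> Xs_iff in blast)
  moreover have "t * G y \<le> t * G p + t * (grad_f y \<bullet> (p - y))"
    using Xs_first_order[OF \<open>y \<in> Xs\<close> T_in_Dom, of y] t_pos unfolding p_def
    by (simp add: distrib_left[symmetric])
  moreover have "((y - t *\<^sub>R grad_f y) - p) \<bullet> (y - p) = (norm (y - p))\<^sup>2 + t * (grad_f y \<bullet> (p - y))"
    by (simp add: power2_norm_eq_inner inner_diff_left inner_diff_right algebra_simps)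
  ultimately have "(norm (y - p))\<^sup>2 \<le> 0" by linarith
  then show "T y = y" unfolding p_def by simp
qed

lemma \<rho>_nonneg: "0 \<le> \<rho>" and \<rho>_less_1: "\<rho> < 1"
proof -
  have "s * \<sigma> \<le> 2 / (L_\<omega> + \<sigma>) * \<sigma>" using s_range \<sigma>_pos by (intro mult_right_mono) auto
  also have "\<dots> < 2" using L_\<omega>_pos \<sigma>_pos by (simp add: field_simps)
  finally show "\<rho> < 1" using s_range \<sigma>_pos unfolding \<rho>_def by (simp add: abs_if)
qed (simp add: \<rho>_def)

lemma S_contraction: "norm (S u - S v) \<le> \<rho> * norm (u - v)"
  unfolding S_def \<rho>_def
  by (rule strongly_convex_gradient_step_contraction[OF \<omega>_sc \<omega>_grad \<sigma>_pos L_\<omega>_pos \<omega>_lip s_range])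

lemma T_continuous: "continuous_on UNIV T"
  unfolding continuous_on_iff by (metis T_nonexpansive dist_norm order_le_less_trans)

lemma Xs_closed: "closed Xs"
proof -
  have "Xs = {y. T y = id y}" using T_fixed_iff by auto
  then show ?thesis using closed_Collect_eq[OF T_continuous continuous_on_id] by simp
qed

lemma Xs_convex: "convex Xs"
proof (rule convexI)
  fix y z :: 'a and a b :: real assume "y \<in> Xs" "z \<in> Xs" "0 \<le> a" "0 \<le> b" "a + b = 1"
  have "y \<in> Dom" "z \<in> Dom" and y_min: "\<And>v. v \<in> Dom \<Longrightarrow> f y + G y \<le> f v + G v"
    and z_min: "\<And>v. v \<in> Dom \<Longrightarrow> f z + G z \<le> f v + G v"
    using \<open>y \<in> Xs\<close> \<open>z \<in> Xs\<close> Xs_iff by auto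
  have a: "a = 1 - b" using \<open>a + b = 1\<close> by simp
  have m: "a *\<^sub>R y + b *\<^sub>R z = y + b *\<^sub>R (z - y)"
    unfolding a by (simp add: algebra_simps)
  have "y + b *\<^sub>R (z - y) \<in> Dom" and Gm: "G (y + b *\<^sub>R (z - y)) \<le> a * G y + b * G z"
    using G_segment[OF \<open>y \<in> Dom\<close> \<open>z \<in> Dom\<close>, of b] \<open>0 \<le> a\<close> \<open>0 \<le> b\<close> unfolding a by auto
  moreover have "f (a *\<^sub>R y + b *\<^sub>R z) \<le> a * f y + b * f z"
    using convex_onD[OF f_convex, of b y z] \<open>0 \<le> a\<close> \<open>0 \<le> b\<close> unfolding a by simp
  moreover have "f z = f y + G y - G z"
    using y_min[OF \<open>z \<in> Dom\<close>] z_min[OF \<open>y \<in> Dom\<close>] by linarith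
  ultimately have "f (a *\<^sub>R y + b *\<^sub>R z) + G (a *\<^sub>R y + b *\<^sub>R z) \<le> f v + G v" if "v \<in> Dom" for v
    using y_min[OF that] unfolding m a by (simp add: algebra_simps)
  then show "a *\<^sub>R y + b *\<^sub>R z \<in> Xs"
    using \<open>y + b *\<^sub>R (z - y) \<in> Dom\<close> Xs_iff m by auto
qed

lemma \<omega>_attains_min_on_Xs: "\<exists>y\<in>Xs. \<forall>z\<in>Xs. \<omega> y \<le> \<omega> z"
proof -
  obtain y0 where "y0 \<in> Xs" using Xs_nonempty by blast
  define r where "r = 2 * norm (grad_\<omega> y0) / \<sigma> + 1"
  define K where "K = Xs \<inter> cball y0 r"
  have "continuous_on K \<omega>"
    using has_derivative_continuous[OF \<omega>_grad] by (intro continuous_at_imp_continuous_on) blast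
  moreover have "compact K" unfolding K_def using Xs_closed by (intro closed_Int_compact) auto
  moreover have "y0 \<in> K" unfolding K_def r_def using \<open>y0 \<in> Xs\<close> \<sigma>_pos by auto
  ultimately obtain y where "y \<in> K" and y_min: "\<And>z. z \<in> K \<Longrightarrow> \<omega> y \<le> \<omega> z"
    using continuous_attains_inf[of K \<omega>] by blast
  have "\<omega> y \<le> \<omega> z" if "z \<in> Xs" for z
  proof (cases "z \<in> cball y0 r")
    case True
    then show ?thesis using y_min that unfolding K_def by blast
  next
    case False
    then have "r < norm (z - y0)" by (simp add: dist_norm norm_minus_commute)
    then have "norm (grad_\<omega> y0) \<le> \<sigma> / 2 * norm (z - y0)"
      using \<sigma>_pos unfolding r_def by (simp add: field_simps)
    then have "norm (grad_\<omega> y0) * norm (z - y0) \<le> \<sigma> / 2 * norm (z - y0) * norm (z - y0)"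
      by (rule mult_right_mono) simp
    then have "norm (grad_\<omega> y0) * norm (z - y0) \<le> \<sigma> / 2 * (norm (z - y0))\<^sup>2"
      by (simp add: power2_eq_square mult.assoc)
    moreover have "- (norm (grad_\<omega> y0) * norm (z - y0)) \<le> grad_\<omega> y0 \<bullet> (z - y0)"
      using norm_cauchy_schwarz[of "- grad_\<omega> y0" "z - y0"] by simp
    moreover have "\<omega> y0 + grad_\<omega> y0 \<bullet> (z - y0) + \<sigma> / 2 * (norm (z - y0))\<^sup>2 \<le> \<omega> z"
      by (rule strongly_convex_above_tangent[OF \<omega>_sc \<omega>_grad])
    moreover have "\<omega> y \<le> \<omega> y0" using y_min \<open>y0 \<in> K\<close> by blast
    ultimately show ?thesis by linarith
  qed
  then show ?thesis using \<open>y \<in> K\<close> unfolding K_def by blast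
qed

lemma min_on_Xs_vi:
  assumes "y \<in> Xs" and y_min: "\<forall>z\<in>Xs. \<omega> y \<le> \<omega> z" and "z \<in> Xs"
  shows "0 \<le> grad_\<omega> y \<bullet> (z - y)"
proof -
  have "0 \<le> grad_\<omega> y \<bullet> (z - y) + L_\<omega> / 2 * (norm (z - y))\<^sup>2 * \<tau>" if "0 < \<tau>" "\<tau> \<le> 1" for \<tau>
  proof -
    have "(1 - \<tau>) *\<^sub>R y + \<tau> *\<^sub>R z \<in> Xs"
      using convexD[OF Xs_convex \<open>y \<in> Xs\<close> \<open>z \<in> Xs\<close>, of "1 - \<tau>" \<tau>] that by simp
    moreover have "(1 - \<tau>) *\<^sub>R y + \<tau> *\<^sub>R z = y + \<tau> *\<^sub>R (z - y)" by (simp add: algebra_simps)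
    ultimately have "\<omega> y \<le> \<omega> (y + \<tau> *\<^sub>R (z - y))" using y_min by simp
    also have "\<dots> \<le> \<omega> y + \<tau> * (grad_\<omega> y \<bullet> (z - y)) + L_\<omega> / 2 * \<tau>\<^sup>2 * (norm (z - y))\<^sup>2"
      using descent_lemma[OF \<omega>_grad lipschitz_imp_monotone_operator_shift[OF \<omega>_lip order_refl],
          of "y + \<tau> *\<^sub>R (z - y)" y]
      by (simp add: power_mult_distrib)
    finally have "0 \<le> \<tau> * (grad_\<omega> y \<bullet> (z - y) + L_\<omega> / 2 * (norm (z - y))\<^sup>2 * \<tau>)"
      by (simp add: algebra_simps power2_eq_square)
    then show ?thesis using that by (simp add: zero_le_mult_iff)
  qed
  then show ?thesis by (rule le_of_le_add_mult)
qed

lemma min_on_Xs_unique: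
  assumes "y \<in> Xs" "\<forall>z\<in>Xs. \<omega> y \<le> \<omega> z" and "y' \<in> Xs" "\<forall>z\<in>Xs. \<omega> y' \<le> \<omega> z"
  shows "y' = y"
proof -
  have "\<omega> y + grad_\<omega> y \<bullet> (y' - y) + \<sigma> / 2 * (norm (y' - y))\<^sup>2 \<le> \<omega> y'"
    by (rule strongly_convex_above_tangent[OF \<omega>_sc \<omega>_grad])
  moreover have "0 \<le> grad_\<omega> y \<bullet> (y' - y)" by (rule min_on_Xs_vi[OF assms(1-3)])
  moreover have "\<omega> y' \<le> \<omega> y" using assms by blast
  ultimately have "\<sigma> / 2 * (norm (y' - y))\<^sup>2 \<le> 0" by linarith
  then show ?thesis using \<sigma>_pos by (simp add: mult_le_0_iff)
qed

definition x_mn :: 'a where "x_mn = (THE y. y \<in> Xs \<and> (\<forall>z\<in>Xs. \<omega> y \<le> \<omega> z))"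

lemma x_mn_in_Xs: "x_mn \<in> Xs" and x_mn_min: "\<forall>z\<in>Xs. \<omega> x_mn \<le> \<omega> z"
proof -
  have "\<exists>!y. y \<in> Xs \<and> (\<forall>z\<in>Xs. \<omega> y \<le> \<omega> z)"
    using \<omega>_attains_min_on_Xs min_on_Xs_unique by blast
  from theI'[OF this] show "x_mn \<in> Xs" "\<forall>z\<in>Xs. \<omega> x_mn \<le> \<omega> z"
    unfolding x_mn_def by blast+
qed

lemma T_x_mn: "T x_mn = x_mn"
  using T_fixed_iff x_mn_in_Xs by blast

end

section \<open>Convergence of BiG-SAM\<close>

locale bigsam = bilevel_problem +
  fixes \<alpha> :: "nat \<Rightarrow> real" and x :: "nat \<Rightarrow> 'a"
  assumes \<alpha>_range: "\<And>k. k \<ge> 1 \<Longrightarrow> 0 < \<alpha> k \<and> \<alpha> k \<le> 1"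
    and \<alpha>_lim: "\<alpha> \<longlonglongrightarrow> 0"
    and \<alpha>_not_summable: "\<not> summable (\<lambda>k. \<alpha> (Suc k))"
    and \<alpha>_ratio: "(\<lambda>k. \<alpha> (Suc (Suc k)) / \<alpha> (Suc k)) \<longlonglongrightarrow> 1"
    and iter: "\<And>k. k \<ge> 1 \<Longrightarrow>
       x k = \<alpha> k *\<^sub>R (x (k - 1) - s *\<^sub>R grad_\<omega> (x (k - 1)))
           + (1 - \<alpha> k) *\<^sub>R prox (\<lambda>u. ereal t * g u) (x (k - 1) - t *\<^sub>R grad_f (x (k - 1)))"
begin

lemma x_Suc: "x (Suc k) = \<alpha> (Suc k) *\<^sub>R S (x k) + (1 - \<alpha> (Suc k)) *\<^sub>R T (x k)"
  using iter[of "Suc k"] unfolding S_def T_def by simp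

lemma \<alpha>_Suc_pos: "0 < \<alpha> (Suc k)" and \<alpha>_Suc_le_1: "\<alpha> (Suc k) \<le> 1"
  using \<alpha>_range[of "Suc k"] by auto

definition \<gamma> :: "nat \<Rightarrow> real" where "\<gamma> k = (1 - \<rho>) * \<alpha> (Suc k)"

lemma \<gamma>_pos: "0 < \<gamma> k" and \<gamma>_le_1: "\<gamma> k \<le> 1"
proof -
  show "0 < \<gamma> k" unfolding \<gamma>_def using \<rho>_less_1 \<alpha>_Suc_pos by simp
  have "(1 - \<rho>) * \<alpha> (Suc k) \<le> 1 * 1"
    using \<rho>_nonneg \<rho>_less_1 \<alpha>_Suc_pos \<alpha>_Suc_le_1 by (intro mult_mono) (auto simp: less_imp_le)
  then show "\<gamma> k \<le> 1" unfolding \<gamma>_def by simp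
qed

lemma \<gamma>_not_summable: "\<not> summable \<gamma>"
proof
  assume "summable \<gamma>"
  then have "summable (\<lambda>k. \<gamma> k / (1 - \<rho>))" by (rule summable_divide)
  then show False using \<alpha>_not_summable \<rho>_less_1 unfolding \<gamma>_def by simp
qed

definition R :: real where "R = max (norm (x 0 - x_mn)) (norm (S x_mn - x_mn) / (1 - \<rho>))"

lemma S_maps_ball: "norm (u - x_mn) \<le> R \<Longrightarrow> norm (S u - x_mn) \<le> R"
proof -
  assume "norm (u - x_mn) \<le> R"
  have "norm (S x_mn - x_mn) / (1 - \<rho>) \<le> R" unfolding R_def by simp
  then have "norm (S x_mn - x_mn) \<le> (1 - \<rho>) * R" using \<rho>_less_1 by (simp add: field_simps)
  moreover have "norm (S u - S x_mn) \<le> \<rho> * R"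
    using S_contraction[of u x_mn] \<open>norm (u - x_mn) \<le> R\<close> \<rho>_nonneg
    by (meson mult_left_mono order_trans)
  moreover have "norm (S u - x_mn) \<le> norm (S u - S x_mn) + norm (S x_mn - x_mn)"
    using norm_triangle_ineq[of "S u - S x_mn" "S x_mn - x_mn"] by simp
  ultimately show ?thesis by (simp add: algebra_simps)
qed

lemma T_maps_ball: "norm (u - x_mn) \<le> R \<Longrightarrow> norm (T u - x_mn) \<le> R"
  using T_nonexpansive[of u x_mn] T_x_mn by simp

lemma iterates_bounded: "norm (x k - x_mn) \<le> R"
proof (induction k)
  case 0
  then show ?case unfolding R_def by simp
next
  case (Suc k)
  have "x (Suc k) - x_mn = \<alpha> (Suc k) *\<^sub>R (S (x k) - x_mn) + (1 - \<alpha> (Suc k)) *\<^sub>R (T (x k) - x_mn)"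
    unfolding x_Suc by (simp add: algebra_simps)
  then have "norm (x (Suc k) - x_mn)
      \<le> \<alpha> (Suc k) * norm (S (x k) - x_mn) + (1 - \<alpha> (Suc k)) * norm (T (x k) - x_mn)"
    using norm_convex_comb_le[of "\<alpha> (Suc k)" "S (x k) - x_mn" "T (x k) - x_mn"]
      \<alpha>_Suc_pos[of k] \<alpha>_Suc_le_1[of k] by simp
  also have "\<dots> \<le> \<alpha> (Suc k) * R + (1 - \<alpha> (Suc k)) * R"
    using S_maps_ball[OF Suc.IH] T_maps_ball[OF Suc.IH] \<alpha>_Suc_pos[of k] \<alpha>_Suc_le_1[of k]
    by (intro add_mono mult_left_mono) auto
  finally show ?case by (simp add: algebra_simps)
qed

lemma S_T_gap_bounded: "norm (S (x k) - T (x k)) \<le> 2 * R"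
  using norm_triangle_ineq4[of "S (x k) - x_mn" "T (x k) - x_mn"]
    S_maps_ball[OF iterates_bounded[of k]] T_maps_ball[OF iterates_bounded[of k]] by simp

lemma successive_diff_recursion:
  "norm (x (Suc (Suc k)) - x (Suc k))
    \<le> (1 - \<gamma> (Suc k)) * norm (x (Suc k) - x k) + \<bar>\<alpha> (Suc (Suc k)) - \<alpha> (Suc k)\<bar> * (2 * R)"
proof -
  define a1 where "a1 = \<alpha> (Suc k)"
  define a2 where "a2 = \<alpha> (Suc (Suc k))"
  define dS where "dS = S (x (Suc k)) - S (x k)"
  define dT where "dT = T (x (Suc k)) - T (x k)"
  have "x (Suc (Suc k)) - x (Suc k) = (a2 *\<^sub>R dS + (1 - a2) *\<^sub>R dT) + (a2 - a1) *\<^sub>R (S (x k) - T (x k))"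
    unfolding a1_def a2_def dS_def dT_def x_Suc[of "Suc k"] x_Suc[of k] by (simp add: algebra_simps)
  then have "norm (x (Suc (Suc k)) - x (Suc k))
      \<le> norm (a2 *\<^sub>R dS + (1 - a2) *\<^sub>R dT) + norm ((a2 - a1) *\<^sub>R (S (x k) - T (x k)))"
    by (metis norm_triangle_ineq)
  also have "\<dots> \<le> a2 * norm dS + (1 - a2) * norm dT + \<bar>a2 - a1\<bar> * norm (S (x k) - T (x k))"
    using norm_convex_comb_le[of a2 dS dT] \<alpha>_Suc_pos[of "Suc k"] \<alpha>_Suc_le_1[of "Suc k"]
    unfolding a2_def by simp
  also have "\<dots> \<le> a2 * (\<rho> * norm (x (Suc k) - x k)) + (1 - a2) * norm (x (Suc k) - x k)
      + \<bar>a2 - a1\<bar> * (2 * R)"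
    using S_contraction T_nonexpansive S_T_gap_bounded \<alpha>_Suc_pos[of "Suc k"] \<alpha>_Suc_le_1[of "Suc k"]
    unfolding a2_def dS_def dT_def by (intro add_mono mult_left_mono) auto
  finally show ?thesis unfolding \<gamma>_def a1_def a2_def by (simp add: algebra_simps)
qed

text \<open>Asymptotic regularity; here \<open>\<alpha>\<^sub>k\<^sub>+\<^sub>1 / \<alpha>\<^sub>k \<rightarrow> 1\<close> makes the perturbation term vanish
  relative to the step \<open>\<gamma>\<close>.\<close>

lemma successive_diff_tendsto_zero: "(\<lambda>k. norm (x (Suc k) - x k)) \<longlonglongrightarrow> 0"
proof (rule xu_lemma)
  define \<delta> where "\<delta> k = 2 * R / (1 - \<rho>) * \<bar>1 - inverse (\<alpha> (Suc (Suc k)) / \<alpha> (Suc k))\<bar>" for k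
  have "\<gamma> (Suc k) * \<delta> k = \<bar>\<alpha> (Suc (Suc k)) - \<alpha> (Suc k)\<bar> * (2 * R)" for k
  proof -
    have "\<bar>1 - inverse (\<alpha> (Suc (Suc k)) / \<alpha> (Suc k))\<bar> = \<bar>\<alpha> (Suc (Suc k)) - \<alpha> (Suc k)\<bar> / \<alpha> (Suc (Suc k))"
      using \<alpha>_Suc_pos[of k] \<alpha>_Suc_pos[of "Suc k"]
      by (simp add: field_simps abs_div_pos del: abs_divide)
    then show ?thesis
      unfolding \<gamma>_def \<delta>_def using \<rho>_less_1 \<alpha>_Suc_pos[of "Suc k"] by (simp add: field_simps)
  qed
  then show "norm (x (Suc (Suc k)) - x (Suc k)) \<le> (1 - \<gamma> (Suc k)) * norm (x (Suc k) - x k) + \<gamma> (Suc k) * \<delta> k" for k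
    using successive_diff_recursion by simp
  have "\<delta> \<longlonglongrightarrow> 2 * R / (1 - \<rho>) * \<bar>1 - inverse 1\<bar>"
    unfolding \<delta>_def by (intro tendsto_intros \<alpha>_ratio) simp
  then have "\<delta> \<longlonglongrightarrow> 0" by simp
  show "eventually (\<lambda>k. \<delta> k \<le> \<epsilon>) sequentially" if "0 < \<epsilon>" for \<epsilon>
    using order_tendstoD(2)[OF \<open>\<delta> \<longlonglongrightarrow> 0\<close> that] by eventually_elim simp
  show "\<not> summable (\<lambda>k. \<gamma> (Suc k))" using \<gamma>_not_summable summable_Suc_iff by blast
qed (use \<gamma>_pos \<gamma>_le_1 in auto)

lemma residual_tendsto_zero: "(\<lambda>k. x k - T (x k)) \<longlonglongrightarrow> 0"
proof -
  have bound: "norm (x k - T (x k)) \<le> norm (x (Suc k) - x k) + \<alpha> (Suc k) * (2 * R)" for k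
  proof -
    have "x (Suc k) - T (x k) = \<alpha> (Suc k) *\<^sub>R (S (x k) - T (x k))"
      unfolding x_Suc by (simp add: algebra_simps)
    then have "norm (x (Suc k) - T (x k)) \<le> \<alpha> (Suc k) * (2 * R)"
      using \<alpha>_Suc_pos[of k] S_T_gap_bounded[of k] by (simp add: mult_left_mono)
    then show ?thesis
      using norm_triangle_ineq4[of "x (Suc k) - T (x k)" "x (Suc k) - x k"] by simp
  qed
  have "(\<lambda>k. norm (x (Suc k) - x k) + \<alpha> (Suc k) * (2 * R)) \<longlonglongrightarrow> 0 + 0 * (2 * R)"
    by (rule tendsto_add[OF successive_diff_tendsto_zero tendsto_mult[OF LIMSEQ_Suc[OF \<alpha>_lim] tendsto_const]])
  then have upper: "(\<lambda>k. norm (x (Suc k) - x k) + \<alpha> (Suc k) * (2 * R)) \<longlonglongrightarrow> 0" by simp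
  have "(\<lambda>k. norm (x k - T (x k))) \<longlonglongrightarrow> 0"
    by (rule tendsto_sandwich[OF _ _ tendsto_const upper]) (simp_all add: bound)
  then show ?thesis by (simp only: tendsto_norm_zero_iff)
qed

lemma subseq_limit_in_Xs:
  assumes "strict_mono q" and xq: "(\<lambda>n. x (q n)) \<longlonglongrightarrow> z"
  shows "z \<in> Xs"
proof -
  have "(\<lambda>n. T (x (q n))) \<longlonglongrightarrow> T z"
    using continuous_on_tendsto_compose[OF T_continuous xq] by simp
  then have "(\<lambda>n. x (q n) - T (x (q n))) \<longlonglongrightarrow> z - T z" by (rule tendsto_diff[OF xq])
  moreover have "(\<lambda>n. x (q n) - T (x (q n))) \<longlonglongrightarrow> 0"
    using LIMSEQ_subseq_LIMSEQ[OF residual_tendsto_zero \<open>strict_mono q\<close>] by (simp add: o_def)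
  ultimately have "z - T z = 0" by (rule LIMSEQ_unique)
  then show ?thesis using T_fixed_iff[of z] by simp
qed

lemma limsup_inner_nonpos:
  assumes "0 < \<epsilon>"
  shows "eventually (\<lambda>k. (S x_mn - x_mn) \<bullet> (x k - x_mn) \<le> \<epsilon>) sequentially"
proof (rule ccontr)
  assume "\<not> ?thesis"
  then have "frequently (\<lambda>k. \<epsilon> < (S x_mn - x_mn) \<bullet> (x k - x_mn)) sequentially"
    by (simp add: not_eventually not_le)
  then have "infinite {k. \<epsilon> < (S x_mn - x_mn) \<bullet> (x k - x_mn)}"
    using frequently_cofinite cofinite_eq_sequentially by metis
  then obtain r :: "nat \<Rightarrow> nat" where "strict_mono r" and r: "\<And>n. \<epsilon> < (S x_mn - x_mn) \<bullet> (x (r n) - x_mn)"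
    using infinite_enumerate by blast
  have "norm (x k) \<le> norm x_mn + R" for k
    using iterates_bounded[of k] norm_triangle_sub[of "x k" x_mn] by linarith
  then have "bounded (range x)" unfolding bounded_iff by blast
  then have "bounded (range (x \<circ> r))" by (rule bounded_subset) auto
  then obtain z r' where "strict_mono r'" and "((x \<circ> r) \<circ> r') \<longlonglongrightarrow> z"
    using bounded_imp_convergent_subsequence by blast
  then have xz: "(\<lambda>n. x (r (r' n))) \<longlonglongrightarrow> z" by (simp add: o_def)
  have "z \<in> Xs"
    using subseq_limit_in_Xs[OF strict_mono_o[OF \<open>strict_mono r\<close> \<open>strict_mono r'\<close>]] xz
    by (simp add: o_def)
  then have "(S x_mn - x_mn) \<bullet> (z - x_mn) \<le> 0"
    using x_mn_in_Xs x_mn_min min_on_Xs_vi s_range unfolding S_def by simp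
  moreover have "(\<lambda>n. (S x_mn - x_mn) \<bullet> (x (r (r' n)) - x_mn)) \<longlonglongrightarrow> (S x_mn - x_mn) \<bullet> (z - x_mn)"
    using xz by (intro tendsto_intros)
  then have "\<epsilon> \<le> (S x_mn - x_mn) \<bullet> (z - x_mn)"
    by (rule tendsto_lowerbound) (simp_all add: r less_imp_le)
  ultimately show False using \<open>0 < \<epsilon>\<close> by simp
qed

text \<open>Splitting \<open>x\<^sub>k\<^sub>+\<^sub>1 - x\<^sub>m\<^sub>n = u + \<alpha>\<^sub>k\<^sub>+\<^sub>1 (S x\<^sub>m\<^sub>n - x\<^sub>m\<^sub>n)\<close> and using
  \<open>\<parallel>u + v\<parallel>\<^sup>2 \<le> \<parallel>u\<parallel>\<^sup>2 + 2 \<langle>v, u + v\<rangle>\<close>.\<close>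

lemma dist_square_recursion:
  "(norm (x (Suc k) - x_mn))\<^sup>2 \<le> (1 - \<gamma> k) * (norm (x k - x_mn))\<^sup>2
     + \<gamma> k * (2 * ((S x_mn - x_mn) \<bullet> (x (Suc k) - x_mn)) / (1 - \<rho>))"
proof -
  define a where "a = \<alpha> (Suc k)"
  define w where "w = S x_mn - x_mn"
  define u where "u = a *\<^sub>R (S (x k) - S x_mn) + (1 - a) *\<^sub>R (T (x k) - x_mn)"
  define n where "n = norm (x k - x_mn)"
  have a: "0 < a" "a \<le> 1" unfolding a_def using \<alpha>_Suc_pos \<alpha>_Suc_le_1 by auto
  have split: "x (Suc k) - x_mn = u + a *\<^sub>R w"
    unfolding u_def w_def a_def x_Suc by (simp add: algebra_simps)
  have "norm u \<le> a * norm (S (x k) - S x_mn) + (1 - a) * norm (T (x k) - x_mn)"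
    unfolding u_def by (rule norm_convex_comb_le) (use a in auto)
  also have "\<dots> \<le> a * (\<rho> * n) + (1 - a) * n"
    using a S_contraction T_nonexpansive[of "x k" x_mn] T_x_mn unfolding n_def
    by (intro add_mono mult_left_mono) auto
  finally have "norm u \<le> (1 - \<gamma> k) * n" unfolding \<gamma>_def a_def by (simp add: algebra_simps)
  then have "(norm u)\<^sup>2 \<le> ((1 - \<gamma> k) * n)\<^sup>2"
    by (intro power_mono) auto
  also have "\<dots> = (1 - \<gamma> k) * ((1 - \<gamma> k) * n\<^sup>2)" by (simp add: power2_eq_square)
  also have "\<dots> \<le> (1 - \<gamma> k) * n\<^sup>2"
    using \<gamma>_pos[of k] \<gamma>_le_1[of k] by (intro mult_left_mono mult_left_le_one_le) auto
  finally have "(norm u)\<^sup>2 \<le> (1 - \<gamma> k) * n\<^sup>2" .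
  moreover have "(norm (u + a *\<^sub>R w))\<^sup>2 \<le> (norm u)\<^sup>2 + 2 * ((a *\<^sub>R w) \<bullet> (u + a *\<^sub>R w))"
    by (rule norm_add_square_le)
  moreover have "2 * ((a *\<^sub>R w) \<bullet> (u + a *\<^sub>R w)) = \<gamma> k * (2 * (w \<bullet> (x (Suc k) - x_mn)) / (1 - \<rho>))"
  proof -
    have "(a *\<^sub>R w) \<bullet> (u + a *\<^sub>R w) = a * (w \<bullet> (x (Suc k) - x_mn))" by (simp add: split)
    then show ?thesis unfolding \<gamma>_def a_def using \<rho>_less_1 by simp
  qed
  ultimately show ?thesis unfolding split n_def w_def by simp
qed

lemma iterates_tendsto_x_mn: "x \<longlonglongrightarrow> x_mn"
proof -
  have "(\<lambda>k. (norm (x k - x_mn))\<^sup>2) \<longlonglongrightarrow> 0"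
  proof (rule xu_lemma[OF _ \<gamma>_pos \<gamma>_le_1 \<gamma>_not_summable _ dist_square_recursion])
    fix \<epsilon> :: real assume "0 < \<epsilon>"
    then have "eventually (\<lambda>k. (S x_mn - x_mn) \<bullet> (x k - x_mn) \<le> \<epsilon> * (1 - \<rho>) / 2) sequentially"
      using \<rho>_less_1 by (intro limsup_inner_nonpos) simp
    then have "eventually (\<lambda>k. (S x_mn - x_mn) \<bullet> (x (Suc k) - x_mn) \<le> \<epsilon> * (1 - \<rho>) / 2) sequentially"
      by (subst eventually_sequentially_Suc)
    then show "eventually (\<lambda>k. 2 * ((S x_mn - x_mn) \<bullet> (x (Suc k) - x_mn)) / (1 - \<rho>) \<le> \<epsilon>) sequentially"
      by eventually_elim (use \<rho>_less_1 in \<open>simp add: field_simps\<close>)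
  qed simp
  then have "(\<lambda>k. sqrt ((norm (x k - x_mn))\<^sup>2)) \<longlonglongrightarrow> sqrt 0" by (intro tendsto_intros)
  then have "(\<lambda>k. x k - x_mn) \<longlonglongrightarrow> 0" by (simp add: tendsto_norm_zero_iff)
  then show ?thesis by (simp add: LIM_zero_iff)
qed

end

theorem proposition3p1:
  fixes f :: "'a::euclidean_space \<Rightarrow> real" and grad_f :: "'a \<Rightarrow> 'a" and L_f :: real
    and g :: "'a \<Rightarrow> ereal"
    and \<omega> :: "'a \<Rightarrow> real" and grad_\<omega> :: "'a \<Rightarrow> 'a" and \<sigma> L_\<omega> :: real
    and \<alpha> :: "nat \<Rightarrow> real" and t s :: real and x :: "nat \<Rightarrow> 'a"
    and Xstar :: "'a set"
  assumes f_convex: "convex_on UNIV f"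
    and f_grad: "\<And>y. (f has_derivative (\<lambda>h. grad_f y \<bullet> h)) (at y)"
    and f_grad_cont: "continuous_on UNIV grad_f"
    and L_f_pos: "L_f > 0"
    and f_lip: "\<And>y z. norm (grad_f y - grad_f z) \<le> L_f * norm (y - z)"
    and g_proper: "proper_fun g" and g_lsc: "lsc_fun g" and g_convex: "convex_ereal_fun g"
    and Xstar_def: "Xstar = {y. \<forall>z. ereal (f y) + g y \<le> ereal (f z) + g z}"
    and Xstar_ne: "Xstar \<noteq> {}"
    and \<sigma>_pos: "\<sigma> > 0"
    and \<omega>_sc: "strongly_convex_fun \<sigma> \<omega>"
    and \<omega>_grad: "\<And>y. (\<omega> has_derivative (\<lambda>h. grad_\<omega> y \<bullet> h)) (at y)"
    and \<omega>_grad_cont: "continuous_on UNIV grad_\<omega>"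
    and L_\<omega>_pos: "L_\<omega> > 0"
    and \<omega>_lip: "\<And>y z. norm (grad_\<omega> y - grad_\<omega> z) \<le> L_\<omega> * norm (y - z)"
    and \<alpha>_range: "\<And>k. k \<ge> 1 \<Longrightarrow> 0 < \<alpha> k \<and> \<alpha> k \<le> 1"
    and \<alpha>_lim: "\<alpha> \<longlonglongrightarrow> 0"
    and \<alpha>_sum: "\<not> summable (\<lambda>k. \<alpha> (Suc k))"
    and \<alpha>_ratio: "(\<lambda>k. \<alpha> (Suc (Suc k)) / \<alpha> (Suc k)) \<longlonglongrightarrow> 1"
    and t_range: "0 < t" "t \<le> 1 / L_f"
    and s_range: "0 < s" "s \<le> 2 / (L_\<omega> + \<sigma>)"
    and iter: "\<And>k. k \<ge> 1 \<Longrightarrow>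
       x k = \<alpha> k *\<^sub>R (x (k - 1) - s *\<^sub>R grad_\<omega> (x (k - 1)))
           + (1 - \<alpha> k) *\<^sub>R prox (\<lambda>u. ereal t * g u) (x (k - 1) - t *\<^sub>R grad_f (x (k - 1)))"
  shows "\<exists>xs\<in>Xstar. x \<longlonglongrightarrow> xs
           \<and> (\<forall>y\<in>Xstar. grad_\<omega> xs \<bullet> (y - xs) \<ge> 0)
           \<and> (\<forall>y\<in>Xstar. \<omega> xs \<le> \<omega> y)
           \<and> (\<forall>z\<in>Xstar. (\<forall>y\<in>Xstar. \<omega> z \<le> \<omega> y) \<longrightarrow> z = xs)"
proof -
  interpret bigsam g t f grad_f L_f \<omega> grad_\<omega> \<sigma> L_\<omega> s \<alpha> x
  proof unfold_locales
    show "{y. \<forall>z. ereal (f y) + g y \<le> ereal (f z) + g z} \<noteq> {}"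
      using Xstar_def Xstar_ne by simp
  qed (use assms in auto)
  have "Xs = Xstar" unfolding Xs_def Xstar_def ..
  moreover have "\<forall>z\<in>Xs. (\<forall>y\<in>Xs. \<omega> z \<le> \<omega> y) \<longrightarrow> z = x_mn"
    using min_on_Xs_unique x_mn_in_Xs x_mn_min by blast
  ultimately show ?thesis
    using x_mn_in_Xs x_mn_min iterates_tendsto_x_mn min_on_Xs_vi[OF x_mn_in_Xs x_mn_min] by blast
qed

end
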